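(* Consider the sequences generated by Algorithm 2 (described in the context), the index set $K$ and indices $(i_k)$ defined in the context, $\sigma:=\frac{2\hat\theta}{\eta L}\in[0,1)$, and let $d_0$ be the distance from $x_0$ to the (nonempty) solution set $(F+N_C)^{-1}(0)$. For $k\in K$ define the ergodic quantities $$y_k^a=\frac{1}{\Lambda_k}\sum_{\ell=1}^k\lambda_{i_\ell}y_{i_\ell},\quad v_k^a=\frac{1}{\Lambda_k}\sum_{\ell=1}^k\lambda_{i_\ell}(F(y_{i_\ell})+\nu_{i_\ell}),\quad \varepsilon_k^a=\frac{1}{\Lambda_k}\sum_{\ell=1}^k\lambda_{i_\ell}\langle y_{i_\ell}-y_k^a,F(y_{i_\ell})+\nu_{i_\ell}-v_k^a\rangle,$$ where $\Lambda_k=\sum_{\ell=1}^k\lambda_{i_\ell}$. Then for all $k\in K$: (a) there exists $1\le j\le k$ such that $\nu_{i_j}\in N_C(y_{i_j})$ and $\|F(y_{i_j})+\nu_{i_j}\|\le\dfrac{d_0^2}{\tau\eta(1-\sigma)k}$; (b) $v_k^a\in(F+N_C)^{\varepsilon_k^a}(y_k^a)$ and $$\|v_k^a\|\le\frac{2d_0^2}{\tau^{3/2}\eta\sqrt{1-\sigma^2}\,k^{3/2}},\qquad \varepsilon_k^a\le\frac{2d_0^3}{\tau^{3/2}\eta(1-\sigma^2)k^{3/2}}.$$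
   Context: Setting: $\mathcal H$ real Hilbert space; $C\subseteq\mathcal H$ nonempty closed convex; $N_C(x)=\{\nu:\langle\nu,y-x\rangle\le0\ \forall y\in C\}$ if $x\in C$, $N_C(x)=\emptyset$ otherwise. $F:C\to\mathcal H$ is monotone, continuously differentiable, and $\|F'(x)-F'(y)\|\le L\|x-y\|$ for all $x,y\in C$, with $L>0$; the set $(F+N_C)^{-1}(0)$ of $x$ with $0\in F(x)+N_C(x)$ is nonempty. For $y\in C$, $F_y(x):=F(y)+F'(y)(x-y)$. For a set-valued $T$ and $\varepsilon\ge0$, $T^\varepsilon(x)=\{v\in\mathcal H:\langle v-u,x-z\rangle\ge-\varepsilon\ \forall z,\ \forall u\in T(z)\}$. Parameters: $0\le\hat\sigma<1/2$; $0<\theta<(1-\hat\sigma)(1-2\hat\sigma)$; $\hat\theta:=\theta\big(\frac{\hat\sigma}{1-\hat\sigma}+\frac{\theta}{(1-\hat\sigma)^2}\big)$; $\eta>2\hat\theta/L$; $\tau:=\dfrac{2(\theta-\hat\theta)}{2\theta+\frac{\eta L}{2}+\sqrt{(2\theta+\frac{\eta L}{2})^2-4\theta(\theta-\hat\theta)}}$ (one has $0<\tau<1$). Algorithm 2: input $x_0\in C$, $y_0:=x_0$, $\nu_0:=0$, $\lambda_1>0$ with $\lambda_1^2\|F(y_0)\|\le2\theta/L$. For $k=1,2,\dots$: if $F(y_{k-1})+\nu_{k-1}=0$, stop and return $y_{k-1}$. If $\frac{\lambda_kL}{2}\|\lambda_k(F(y_{k-1})+\nu_{k-1})+y_{k-1}-x_{k-1}\|\le\hat\theta$,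 set $y_k=y_{k-1}$, $\nu_k=\nu_{k-1}$; otherwise find any $(y_k,\nu_k)$ with $\nu_k\in N_C(y_k)$ and $\|\lambda_k(F_{y_{k-1}}(y_k)+\nu_k)+y_k-x_{k-1}\|\le\hat\sigma\|y_k-y_{k-1}\|$. Then, if $\lambda_k\|y_k-x_{k-1}\|\ge\eta$, set $x_k=x_{k-1}-\tau\lambda_k(F(y_k)+\nu_k)$ and $\lambda_{k+1}=(1-\tau)\lambda_k$; else set $x_k=x_{k-1}$ and $\lambda_{k+1}=\lambda_k/(1-\tau)$. Standing assumption: the algorithm never stops at the first test, i.e. $F(y_{k-1})+\nu_{k-1}\neq0$ for all $k$. Index sets: $A=\{k\ge1:\lambda_k\|y_k-x_{k-1}\|\ge\eta\}$; $K=\{k\ge1:k\le\#A\}$; $i_0=0$ and $i_k$ is the $k$-th element of $A$ in increasing order. *)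

theory Defs
  imports "HOL-Analysis.Analysis" "HOL-Library.Infinite_Set"
begin

definition normal_cone :: "'a::real_inner set \<Rightarrow> 'a \<Rightarrow> 'a set" where
  "normal_cone C x = (if x \<in> C then {v. \<forall>y\<in>C. inner v (y - x) \<le> 0} else {})"

definition linearization :: "('a::real_normed_vector \<Rightarrow> 'a) \<Rightarrow> ('a \<Rightarrow> 'a \<Rightarrow>\<^sub>L 'a) \<Rightarrow> 'a \<Rightarrow> 'a \<Rightarrow> 'a" where
  "linearization F F' y x = F y + blinfun_apply (F' y) (x - y)"

definition FN :: "('a::real_inner \<Rightarrow> 'a) \<Rightarrow> 'a set \<Rightarrow> 'a \<Rightarrow> 'a set" where
  "FN F C z = {F z + \<nu> | \<nu>. \<nu> \<in> normal_cone C z}"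

definition enlargement :: "('a::real_inner \<Rightarrow> 'a set) \<Rightarrow> real \<Rightarrow> 'a \<Rightarrow> 'a set" where
  "enlargement T \<epsilon> x = {v. \<forall>z. \<forall>u\<in>T z. inner (v - u) (x - z) \<ge> - \<epsilon>}"

definition solution_set :: "('a::real_inner \<Rightarrow> 'a) \<Rightarrow> 'a set \<Rightarrow> 'a set" where
  "solution_set F C = {x. 0 \<in> FN F C x}"

definition thetahat :: "real \<Rightarrow> real \<Rightarrow> real" where
  "thetahat \<theta> \<sigma>h = \<theta> * (\<sigma>h / (1 - \<sigma>h) + \<theta> / (1 - \<sigma>h)\<^sup>2)"

definition tau :: "real \<Rightarrow> real \<Rightarrow> real \<Rightarrow> real \<Rightarrow> real" where
  "tau \<theta> \<sigma>h \<eta> L = (let th = thetahat \<theta> \<sigma>h in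
     2 * (\<theta> - th) / (2 * \<theta> + \<eta> * L / 2 + sqrt ((2 * \<theta> + \<eta> * L / 2)\<^sup>2 - 4 * \<theta> * (\<theta> - th))))"

text \<open>Sequences (x_k, y_k, nu_k, lambda_k) generated by Algorithm 2 (never stopping).
  lam 0 is unused; lam k for k \<ge> 1 is lambda_k.\<close>
definition alg2 ::
  "('a::real_inner \<Rightarrow> 'a) \<Rightarrow> ('a \<Rightarrow> 'a \<Rightarrow>\<^sub>L 'a) \<Rightarrow> 'a set \<Rightarrow> real \<Rightarrow> real \<Rightarrow> real \<Rightarrow> real \<Rightarrow>
   (nat \<Rightarrow> 'a) \<Rightarrow> (nat \<Rightarrow> 'a) \<Rightarrow> (nat \<Rightarrow> 'a) \<Rightarrow> (nat \<Rightarrow> real) \<Rightarrow> bool" where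
  "alg2 F F' C L \<sigma>h \<theta> \<eta> x y \<nu> lam \<longleftrightarrow>
     x 0 \<in> C \<and> y 0 = x 0 \<and> \<nu> 0 = 0 \<and>
     lam 1 > 0 \<and> (lam 1)\<^sup>2 * norm (F (y 0)) \<le> 2 * \<theta> / L \<and>
     (\<forall>k\<ge>1. F (y (k - 1)) + \<nu> (k - 1) \<noteq> 0) \<and>
     (\<forall>k\<ge>1.
        (if lam k * L / 2 * norm (lam k *\<^sub>R (F (y (k - 1)) + \<nu> (k - 1)) + y (k - 1) - x (k - 1))
              \<le> thetahat \<theta> \<sigma>h
         then y k = y (k - 1) \<and> \<nu> k = \<nu> (k - 1)
         else \<nu> k \<in> normal_cone C (y k) \<and>
              norm (lam k *\<^sub>R (linearization F F' (y (k - 1)) (y k) + \<nu> k) + y k - x (k - 1))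
                \<le> \<sigma>h * norm (y k - y (k - 1))) \<and>
        (if lam k * norm (y k - x (k - 1)) \<ge> \<eta>
         then x k = x (k - 1) - (tau \<theta> \<sigma>h \<eta> L * lam k) *\<^sub>R (F (y k) + \<nu> k) \<and>
              lam (k + 1) = (1 - tau \<theta> \<sigma>h \<eta> L) * lam k
         else x k = x (k - 1) \<and> lam (k + 1) = lam k / (1 - tau \<theta> \<sigma>h \<eta> L)))"

definition idxA :: "(nat \<Rightarrow> 'a::real_normed_vector) \<Rightarrow> (nat \<Rightarrow> 'a) \<Rightarrow> (nat \<Rightarrow> real) \<Rightarrow> real \<Rightarrow> nat set" where
  "idxA x y lam \<eta> = {k. k \<ge> 1 \<and> lam k * norm (y k - x (k - 1)) \<ge> \<eta>}"

definition idxK :: "nat set \<Rightarrow> nat set" where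
  "idxK A = {k. k \<ge> 1 \<and> (infinite A \<or> k \<le> card A)}"

definition idx_i :: "nat set \<Rightarrow> nat \<Rightarrow> nat" where
  "idx_i A l = (if l = 0 then 0 else enumerate A (l - 1))"

definition erg_Lambda :: "(nat \<Rightarrow> real) \<Rightarrow> (nat \<Rightarrow> nat) \<Rightarrow> nat \<Rightarrow> real" where
  "erg_Lambda lam i k = (\<Sum>l=1..k. lam (i l))"

definition erg_avg :: "(nat \<Rightarrow> real) \<Rightarrow> (nat \<Rightarrow> nat) \<Rightarrow> (nat \<Rightarrow> 'a::real_vector) \<Rightarrow> nat \<Rightarrow> 'a" where
  "erg_avg lam i z k = (1 / erg_Lambda lam i k) *\<^sub>R (\<Sum>l=1..k. lam (i l) *\<^sub>R z (i l))"

definition erg_eps :: "(nat \<Rightarrow> real) \<Rightarrow> (nat \<Rightarrow> nat) \<Rightarrow> (nat \<Rightarrow> 'a::real_inner) \<Rightarrow> (nat \<Rightarrow> 'a) \<Rightarrow> nat \<Rightarrow> real" where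
  "erg_eps lam i y g k = (1 / erg_Lambda lam i k) *
     (\<Sum>l=1..k. lam (i l) * inner (y (i l) - erg_avg lam i y k) (g (i l) - erg_avg lam i g k))"

end

theory Submission
  imports Defs
begin

(*
  Along Algorithm 2 the quantity lambda_k L/2 |lambda_k (F y_(k-1) + nu_(k-1)) + y_(k-1) - x_(k-1)|
  stays below theta: an inexact Newton step on the linearisation at y_(k-1) turns this into the bound
  thetahat at y_k (Taylor with Lipschitz derivative, and F' monotone along C), and tau is chosen so
  that both updates of lambda restore the bound theta. Hence the steps with
  lambda_k |y_k - x_(k-1)| >= eta form a large-step hybrid proximal extragradient method with relative
  error sigma = 2 thetahat / (eta L), and all other steps leave x unchanged. Along this subsequence a
  Fejer estimate bounds the sum of |y_l - x_(l-1)|^2 by d0^2 / ((1 - sigma^2) tau); together with the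
  large-step condition and k^3 <= (sum a_l^2) (sum 1/a_l)^2 it yields
  Lambda_k >= eta sqrt (tau (1 - sigma^2)) k^(3/2) / d0, from which all rates follow. The ergodic pair
  lies in the enlargement of F + N_C because weighted averages satisfy a bias-variance identity.
*)

section \<open>Taylor estimates and normal cones\<close>

lemma segment_in_convex:
  assumes "convex C" "y \<in> C" "z \<in> C" "t \<in> {0..1}"
  shows "y + t *\<^sub>R (z - y) \<in> C"
proof -
  have "y + t *\<^sub>R (z - y) = (1 - t) *\<^sub>R y + t *\<^sub>R z" by (simp add: algebra_simps)
  with assms show ?thesis by (auto intro: convexD)
qed

lemma lipschitz_derivative_remainder:
  fixes F :: "'a::real_inner \<Rightarrow> 'a" and F' :: "'a \<Rightarrow> 'a \<Rightarrow>\<^sub>L 'a"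
  assumes C: "convex C"
    and F_deriv: "\<forall>u\<in>C. (F has_derivative blinfun_apply (F' u)) (at u within C)"
    and F'_lip: "\<forall>u\<in>C. \<forall>w\<in>C. norm (F' u - F' w) \<le> L * norm (u - w)"
    and y: "y \<in> C" and z: "z \<in> C" and L: "L \<ge> 0"
  shows "norm (F z - F y - F' y (z - y)) \<le> L / 2 * (norm (z - y))\<^sup>2"
proof -
  define d where "d = z - y"
  define w where "w = F z - F y - F' y d"
  define p where "p t = y + t *\<^sub>R d" for t :: real
  have pC: "p t \<in> C" if "t \<in> {0..1}" for t
    using segment_in_convex[OF C y z that] by (simp add: p_def d_def)
  have Fp: "((\<lambda>t. F (p t)) has_derivative (\<lambda>s. F' (p t) (s *\<^sub>R d))) (at t within {0..1})"
    if "t \<in> {0..1}" for t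
  proof (rule has_derivative_in_compose2[of C F "\<lambda>u. blinfun_apply (F' u)"])
    show "(p has_derivative (\<lambda>s. s *\<^sub>R d)) (at t within {0..1})"
      unfolding p_def by (auto intro!: derivative_eq_intros)
  qed (use F_deriv pC that in auto)
  \<comment> \<open>The quadratic correction makes the derivative of \<open>\<phi>\<close> nonpositive, so the mean value
    theorem loses nothing and yields the sharp constant \<open>L/2\<close>.\<close>
  define \<phi> where "\<phi> t = inner (F (p t) - F y - t *\<^sub>R F' y d) w - L/2 * t\<^sup>2 * (norm d)\<^sup>2 * norm w" for t
  define \<phi>' where "\<phi>' t s = inner (F' (p t) (s *\<^sub>R d) - s *\<^sub>R F' y d) w - L * t * s * (norm d)\<^sup>2 * norm w"
    for t s :: real
  have "(\<phi> has_derivative \<phi>' t) (at t within {0..1})" if "0 \<le> t" "t \<le> 1" for t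
    unfolding \<phi>_def \<phi>'_def using that
    by (auto intro!: derivative_eq_intros Fp simp: power2_eq_square algebra_simps)
  then obtain \<xi> where \<xi>: "\<xi> \<in> {0..1}" "\<phi> 1 - \<phi> 0 = \<phi>' \<xi> 1"
    using mvt_very_simple[of 0 1 \<phi> \<phi>'] by auto
  have "\<phi>' \<xi> 1 = inner ((F' (p \<xi>) - F' y) d) w - L * \<xi> * (norm d)\<^sup>2 * norm w"
    by (simp add: \<phi>'_def blinfun.diff_left)
  also have "\<dots> \<le> norm (F' (p \<xi>) - F' y) * norm d * norm w - L * \<xi> * (norm d)\<^sup>2 * norm w"
    using norm_cauchy_schwarz[of "(F' (p \<xi>) - F' y) d" w] norm_blinfun[of "F' (p \<xi>) - F' y" d]
    by (smt (verit) mult_right_mono norm_ge_zero)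
  also have "\<dots> \<le> (L * norm (p \<xi> - y)) * norm d * norm w - L * \<xi> * (norm d)\<^sup>2 * norm w"
    using F'_lip pC[OF \<xi>(1)] y by (intro diff_right_mono mult_right_mono) auto
  also have "\<dots> = 0" using \<xi>(1) by (simp add: p_def power2_eq_square)
  finally have "\<phi> 1 \<le> \<phi> 0" using \<xi> by simp
  hence "norm w * norm w \<le> (L/2 * (norm d)\<^sup>2) * norm w"
    by (simp add: \<phi>_def p_def w_def d_def power2_norm_eq_inner[symmetric] power2_eq_square algebra_simps)
  hence "norm w \<le> L/2 * (norm d)\<^sup>2"
    by (cases "norm w = 0") (auto simp: mult_le_cancel_right L)
  thus ?thesis by (simp add: w_def d_def)
qed

lemma monotone_derivative_nonneg:
  fixes F :: "'a::real_inner \<Rightarrow> 'a" and F' :: "'a \<Rightarrow> 'a \<Rightarrow>\<^sub>L 'a"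
  assumes C: "convex C"
    and F_mono: "\<forall>u\<in>C. \<forall>w\<in>C. inner (F u - F w) (u - w) \<ge> 0"
    and F_deriv: "\<forall>u\<in>C. (F has_derivative blinfun_apply (F' u)) (at u within C)"
    and F'_lip: "\<forall>u\<in>C. \<forall>w\<in>C. norm (F' u - F' w) \<le> L * norm (u - w)"
    and y: "y \<in> C" and z: "z \<in> C" and L: "L \<ge> 0"
  shows "inner (F' y (z - y)) (z - y) \<ge> 0"
proof (rule tendsto_upperbound)
  define d where "d = z - y"
  show "((\<lambda>t. - (L / 2 * norm d ^ 3) * t) \<longlongrightarrow> 0) (at_right 0)"
    by (auto intro!: tendsto_eq_intros)
  show "\<forall>\<^sub>F t in at_right 0. - (L / 2 * norm d ^ 3) * t \<le> inner (F' y (z - y)) (z - y)"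
    unfolding eventually_at_right[OF zero_less_one]
  proof (intro exI[of _ 1] conjI ballI impI allI, simp)
    fix t :: real assume t: "0 < t" "t < 1"
    define u where "u = y + t *\<^sub>R d"
    have u: "u \<in> C" using segment_in_convex[OF C y z] t by (simp add: u_def d_def)
    have "inner (F u - F y) (t *\<^sub>R d) \<ge> 0" using F_mono u y by (metis u_def add_diff_cancel_left')
    hence mono: "inner (F u - F y) d \<ge> 0" using t by (simp add: zero_le_mult_iff)
    have "inner (F u - F y - F' y (t *\<^sub>R d)) d \<le> norm (F u - F y - F' y (t *\<^sub>R d)) * norm d"
      by (rule norm_cauchy_schwarz)
    also have "\<dots> \<le> L / 2 * (norm (t *\<^sub>R d))\<^sup>2 * norm d"
      using lipschitz_derivative_remainder[OF C F_deriv F'_lip y u L]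
      by (intro mult_right_mono) (auto simp: u_def)
    also have "\<dots> = t * (L / 2 * norm d ^ 3 * t)"
      using t by (simp add: power2_eq_square power3_eq_cube)
    finally have "t * (- (L / 2 * norm d ^ 3) * t) \<le> t * inner (F' y d) d"
      using mono by (simp add: blinfun.scaleR_right algebra_simps)
    from mult_left_le_imp_le[OF this t(1)]
    show "- (L / 2 * norm d ^ 3) * t \<le> inner (F' y (z - y)) (z - y)" by (simp add: d_def)
  qed
qed simp

lemma normal_cone_in: "\<nu> \<in> normal_cone C x \<Longrightarrow> x \<in> C"
  by (auto simp: normal_cone_def split: if_splits)

lemma normal_cone_inner_le: "\<nu> \<in> normal_cone C x \<Longrightarrow> y \<in> C \<Longrightarrow> inner \<nu> (y - x) \<le> 0"
  by (auto simp: normal_cone_def split: if_splits)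

lemma zero_in_normal_cone: "x \<in> C \<Longrightarrow> 0 \<in> normal_cone C x"
  by (simp add: normal_cone_def)

lemma normal_cone_monotone:
  assumes "\<nu>1 \<in> normal_cone C x1" "\<nu>2 \<in> normal_cone C x2"
  shows "inner (\<nu>1 - \<nu>2) (x1 - x2) \<ge> 0"
proof -
  have "inner \<nu>1 (x2 - x1) \<le> 0" "inner \<nu>2 (x1 - x2) \<le> 0"
    using assms normal_cone_inner_le normal_cone_in by blast+
  thus ?thesis by (simp add: inner_diff_left inner_diff_right inner_commute)
qed

lemma FN_monotone:
  assumes F_mono: "\<forall>u\<in>C. \<forall>w\<in>C. inner (F u - F w) (u - w) \<ge> 0"
    and "u1 \<in> FN F C z1" "u2 \<in> FN F C z2"
  shows "inner (u1 - u2) (z1 - z2) \<ge> 0"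
proof -
  obtain \<nu>1 \<nu>2 where \<nu>: "u1 = F z1 + \<nu>1" "\<nu>1 \<in> normal_cone C z1" "u2 = F z2 + \<nu>2" "\<nu>2 \<in> normal_cone C z2"
    using assms(2,3) by (auto simp: FN_def)
  have "inner (F z1 - F z2) (z1 - z2) \<ge> 0" using F_mono \<nu> normal_cone_in by blast
  moreover have "inner (\<nu>1 - \<nu>2) (z1 - z2) \<ge> 0" using normal_cone_monotone \<nu> by blast
  ultimately show ?thesis by (simp add: \<nu> algebra_simps)
qed

section \<open>Inexact Newton steps\<close>

lemma inexact_newton_step_length:
  fixes F :: "'a::real_inner \<Rightarrow> 'a" and F' :: "'a \<Rightarrow> 'a \<Rightarrow>\<^sub>L 'a"
  assumes C: "convex C"
    and F_mono: "\<forall>u\<in>C. \<forall>w\<in>C. inner (F u - F w) (u - w) \<ge> 0"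
    and F_deriv: "\<forall>u\<in>C. (F has_derivative blinfun_apply (F' u)) (at u within C)"
    and F'_lip: "\<forall>u\<in>C. \<forall>w\<in>C. norm (F' u - F' w) \<le> L * norm (u - w)"
    and L: "L \<ge> 0"
    and \<nu>0: "\<nu>0 \<in> normal_cone C y0" and \<nu>1: "\<nu>1 \<in> normal_cone C y1" and lam: "lam \<ge> 0"
    and err: "norm (lam *\<^sub>R (linearization F F' y0 y1 + \<nu>1) + y1 - x) \<le> \<sigma>h * norm (y1 - y0)"
  shows "(1 - \<sigma>h) * norm (y1 - y0) \<le> norm (lam *\<^sub>R (F y0 + \<nu>0) + y0 - x)"
proof -
  define d where "d = y1 - y0"
  define R where "R = lam *\<^sub>R (F y0 + \<nu>0) + y0 - x"
  define E where "E = lam *\<^sub>R (linearization F F' y0 y1 + \<nu>1) + y1 - x"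
  have "inner (F' y0 d) d \<ge> 0"
    unfolding d_def using monotone_derivative_nonneg[OF C F_mono F_deriv F'_lip] \<nu>0 \<nu>1 L
    by (auto dest: normal_cone_in)
  moreover have "inner (\<nu>1 - \<nu>0) d \<ge> 0" unfolding d_def by (rule normal_cone_monotone[OF \<nu>1 \<nu>0])
  moreover have "inner (E - R) d = lam * inner (F' y0 d) d + lam * inner (\<nu>1 - \<nu>0) d + (norm d)\<^sup>2"
    by (simp add: E_def R_def d_def linearization_def algebra_simps power2_norm_eq_inner)
  ultimately have "(norm d)\<^sup>2 \<le> inner (E - R) d" using lam by simp
  also have "\<dots> \<le> norm (E - R) * norm d" by (rule norm_cauchy_schwarz)
  also have "\<dots> \<le> (\<sigma>h * norm d + norm R) * norm d"
    using err norm_triangle_ineq4[of E R] by (intro mult_right_mono) (auto simp: E_def d_def)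
  finally have "norm d * norm d \<le> (\<sigma>h * norm d + norm R) * norm d" by (simp add: power2_eq_square)
  hence "norm d \<le> \<sigma>h * norm d + norm R"
    by (cases "d = 0") (auto intro: mult_right_le_imp_le)
  thus ?thesis by (simp add: d_def R_def algebra_simps)
qed

lemma newton_step_residual:
  fixes F :: "'a::real_inner \<Rightarrow> 'a" and F' :: "'a \<Rightarrow> 'a \<Rightarrow>\<^sub>L 'a"
  assumes C: "convex C"
    and F_mono: "\<forall>u\<in>C. \<forall>w\<in>C. inner (F u - F w) (u - w) \<ge> 0"
    and F_deriv: "\<forall>u\<in>C. (F has_derivative blinfun_apply (F' u)) (at u within C)"
    and F'_lip: "\<forall>u\<in>C. \<forall>w\<in>C. norm (F' u - F' w) \<le> L * norm (u - w)"
    and L: "L > 0" and \<sigma>h: "0 \<le> \<sigma>h" "\<sigma>h < 1"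
    and \<nu>0: "\<nu>0 \<in> normal_cone C y0" and \<nu>1: "\<nu>1 \<in> normal_cone C y1" and lam: "lam > 0"
    and err: "norm (lam *\<^sub>R (linearization F F' y0 y1 + \<nu>1) + y1 - x) \<le> \<sigma>h * norm (y1 - y0)"
    and prev: "lam * L / 2 * norm (lam *\<^sub>R (F y0 + \<nu>0) + y0 - x) \<le> \<theta>"
  shows "lam * L / 2 * norm (lam *\<^sub>R (F y1 + \<nu>1) + y1 - x) \<le> thetahat \<theta> \<sigma>h"
proof -
  define d where "d = y1 - y0"
  define s where "s = lam * L / 2 * norm d"
  have s0: "s \<ge> 0" using lam L by (simp add: s_def)
  have "(1 - \<sigma>h) * s \<le> lam * L / 2 * norm (lam *\<^sub>R (F y0 + \<nu>0) + y0 - x)"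
    using inexact_newton_step_length[OF C F_mono F_deriv F'_lip _ \<nu>0 \<nu>1 _ err] lam L
    by (simp add: s_def d_def mult.left_commute)
  hence s: "s \<le> \<theta> / (1 - \<sigma>h)" using prev \<sigma>h by (simp add: pos_le_divide_eq mult.commute)
  have Taylor: "norm (F y1 - F y0 - F' y0 d) \<le> L / 2 * (norm d)\<^sup>2"
    unfolding d_def using lipschitz_derivative_remainder[OF C F_deriv F'_lip] \<nu>0 \<nu>1 L
    by (auto dest: normal_cone_in)
  have "lam *\<^sub>R (F y1 + \<nu>1) + y1 - x
      = (lam *\<^sub>R (linearization F F' y0 y1 + \<nu>1) + y1 - x) + lam *\<^sub>R (F y1 - F y0 - F' y0 d)"
    by (simp add: linearization_def d_def algebra_simps)
  also have "norm \<dots> \<le> \<sigma>h * norm d + lam * (L / 2 * (norm d)\<^sup>2)"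
    using norm_triangle_ineq err Taylor lam
    by (smt (verit, best) d_def mult_left_mono norm_scaleR)
  finally have "lam * L / 2 * norm (lam *\<^sub>R (F y1 + \<nu>1) + y1 - x)
      \<le> lam * L / 2 * (\<sigma>h * norm d + lam * (L / 2 * (norm d)\<^sup>2))"
    using lam L by (intro mult_left_mono) auto
  also have "\<dots> = \<sigma>h * s + s\<^sup>2" by (simp add: s_def power2_eq_square algebra_simps)
  also have "\<dots> \<le> \<sigma>h * (\<theta> / (1 - \<sigma>h)) + (\<theta> / (1 - \<sigma>h))\<^sup>2"
    using s s0 \<sigma>h by (intro add_mono mult_left_mono power_mono) auto
  also have "\<dots> = thetahat \<theta> \<sigma>h"
    using \<sigma>h by (simp add: thetahat_def power2_eq_square field_simps)
  finally show ?thesis .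
qed

section \<open>Ergodic averages\<close>

lemma erg_deviation_sum:
  assumes "erg_Lambda lam i k \<noteq> 0"
  shows "(\<Sum>l=1..k. lam (i l) *\<^sub>R (z (i l) - erg_avg lam i z k)) = 0"
proof -
  have "(\<Sum>l=1..k. lam (i l) *\<^sub>R (z (i l) - erg_avg lam i z k))
      = (\<Sum>l=1..k. lam (i l) *\<^sub>R z (i l)) - erg_Lambda lam i k *\<^sub>R erg_avg lam i z k"
    by (simp add: erg_Lambda_def scaleR_diff_right sum_subtractf scaleR_sum_left)
  also have "\<dots> = 0" using assms by (simp add: erg_avg_def)
  finally show ?thesis .
qed

lemma erg_inner_decomposition:
  fixes y g :: "nat \<Rightarrow> 'a::real_inner"
  assumes \<Lambda>: "erg_Lambda lam i k \<noteq> 0"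
  shows "(\<Sum>l=1..k. lam (i l) * inner (y (i l) - z) (g (i l) - u))
    = erg_Lambda lam i k * (erg_eps lam i y g k + inner (erg_avg lam i y k - z) (erg_avg lam i g k - u))"
proof -
  define ya va where "ya = erg_avg lam i y k" and "va = erg_avg lam i g k"
  have "inner (y (i l) - z) (g (i l) - u)
      = inner (y (i l) - ya) (g (i l) - va) + inner (y (i l) - ya) (va - u)
        + inner (ya - z) (g (i l) - va) + inner (ya - z) (va - u)" for l
    by (simp add: algebra_simps inner_commute)
  hence "(\<Sum>l=1..k. lam (i l) * inner (y (i l) - z) (g (i l) - u))
      = (\<Sum>l=1..k. lam (i l) * inner (y (i l) - ya) (g (i l) - va))
        + inner (\<Sum>l=1..k. lam (i l) *\<^sub>R (y (i l) - ya)) (va - u)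
        + inner (ya - z) (\<Sum>l=1..k. lam (i l) *\<^sub>R (g (i l) - va))
        + erg_Lambda lam i k * inner (ya - z) (va - u)"
    by (simp add: distrib_left sum.distrib inner_sum_left inner_sum_right erg_Lambda_def
        flip: sum_distrib_right)
  also have "\<dots> = erg_Lambda lam i k * (erg_eps lam i y g k + inner (ya - z) (va - u))"
    using \<Lambda> erg_deviation_sum[OF \<Lambda>, of y] erg_deviation_sum[OF \<Lambda>, of g]
    by (simp add: ya_def va_def erg_eps_def distrib_left)
  finally show ?thesis by (simp add: ya_def va_def)
qed

lemma erg_avg_in_enlargement:
  assumes T_mono: "\<And>z1 z2 u1 u2. u1 \<in> T z1 \<Longrightarrow> u2 \<in> T z2 \<Longrightarrow> inner (u1 - u2) (z1 - z2) \<ge> 0"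
    and \<Lambda>: "erg_Lambda lam i k > 0" and lam: "\<And>l. l \<in> {1..k} \<Longrightarrow> lam (i l) \<ge> 0"
    and g: "\<And>l. l \<in> {1..k} \<Longrightarrow> g (i l) \<in> T (y (i l))"
  shows "erg_avg lam i g k \<in> enlargement T (erg_eps lam i y g k) (erg_avg lam i y k)"
  unfolding enlargement_def
proof (intro CollectI allI ballI)
  fix z u assume u: "u \<in> T z"
  have "0 \<le> (\<Sum>l=1..k. lam (i l) * inner (y (i l) - z) (g (i l) - u))"
    using lam T_mono[OF g u] by (intro sum_nonneg mult_nonneg_nonneg) (auto simp: inner_commute)
  also have "\<dots> = erg_Lambda lam i k
      * (erg_eps lam i y g k + inner (erg_avg lam i y k - z) (erg_avg lam i g k - u))"
    using \<Lambda> by (intro erg_inner_decomposition) simp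
  finally show "inner (erg_avg lam i g k - u) (erg_avg lam i y k - z) \<ge> - erg_eps lam i y g k"
    using \<Lambda> by (simp add: zero_le_mult_iff inner_commute)
qed

lemma erg_avg_in_convex:
  assumes "convex S" and \<Lambda>: "erg_Lambda lam i k > 0"
    and lam: "\<And>l. l \<in> {1..k} \<Longrightarrow> lam (i l) \<ge> 0" and z: "\<And>l. l \<in> {1..k} \<Longrightarrow> z (i l) \<in> S"
  shows "erg_avg lam i z k \<in> S"
proof -
  have "(\<Sum>l=1..k. (lam (i l) / erg_Lambda lam i k) *\<^sub>R z (i l)) \<in> S"
    using \<Lambda> lam z by (intro convex_sum[OF _ \<open>convex S\<close>])
      (auto simp: erg_Lambda_def simp flip: sum_divide_distrib)
  thus ?thesis by (simp add: erg_avg_def scaleR_sum_right divide_inverse_commute)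
qed

lemma erg_avg_reindex: "erg_avg (\<lambda>l. lam (i l)) id (\<lambda>l. z (i l)) k = erg_avg lam i z k"
  by (simp add: erg_avg_def erg_Lambda_def)

lemma erg_eps_reindex:
  "erg_eps (\<lambda>l. lam (i l)) id (\<lambda>l. y (i l)) (\<lambda>l. g (i l)) k = erg_eps lam i y g k"
  by (simp add: erg_eps_def erg_avg_def erg_Lambda_def)

section \<open>Large-step hybrid proximal extragradient iterations\<close>

lemma hpe_step_estimate:
  fixes x0 x1 y v w :: "'a::real_inner"
  assumes x1: "x1 = x0 - (\<tau> * lm) *\<^sub>R v"
    and err: "norm (lm *\<^sub>R v + y - x0) \<le> \<sigma> * norm (y - x0)"
    and \<tau>: "0 < \<tau>" "\<tau> \<le> 1" and \<sigma>: "0 \<le> \<sigma>"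
  shows "lm * inner (y - w) v + (1 - \<sigma>\<^sup>2) / 2 * (norm (y - x0))\<^sup>2
    \<le> ((norm (x0 - w))\<^sup>2 - (norm (x1 - w))\<^sup>2) / (2 * \<tau>)"
proof -
  define a where "a = y - x0"
  define b where "b = lm *\<^sub>R v"
  have "norm (a + b) \<le> \<sigma> * norm a" using err by (simp add: a_def b_def algebra_simps)
  hence "(norm (a + b))\<^sup>2 \<le> (\<sigma> * norm a)\<^sup>2" by (rule power_mono) simp
  hence err2: "(norm a)\<^sup>2 + 2 * inner a b + (norm b)\<^sup>2 \<le> \<sigma>\<^sup>2 * (norm a)\<^sup>2"
    by (simp add: power2_norm_eq_inner inner_add_left inner_add_right inner_commute power_mult_distrib)
  have x1w: "x1 - w = (x0 - w) - \<tau> *\<^sub>R b" by (simp add: x1 b_def algebra_simps)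
  have "(norm (x1 - w))\<^sup>2 = (norm (x0 - w))\<^sup>2 - 2 * \<tau> * inner (x0 - w) b + \<tau>\<^sup>2 * (norm b)\<^sup>2"
    unfolding x1w power2_norm_eq_inner by (simp add: inner_commute power2_eq_square algebra_simps)
  hence "((norm (x0 - w))\<^sup>2 - (norm (x1 - w))\<^sup>2) / (2 * \<tau>) = inner (x0 - w) b - \<tau> * (norm b)\<^sup>2 / 2"
    using \<tau> by (simp add: field_simps power2_eq_square)
  moreover have "lm * inner (y - w) v = inner a b + inner (x0 - w) b"
    by (simp add: a_def b_def algebra_simps)
  moreover have "\<tau> * (norm b)\<^sup>2 \<le> (norm b)\<^sup>2" using \<tau> mult_right_mono[of \<tau> 1 "(norm b)\<^sup>2"] by simp
  ultimately have "lm * inner (y - w) v + (1 - \<sigma>\<^sup>2) / 2 * (norm a)\<^sup>2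
      \<le> ((norm (x0 - w))\<^sup>2 - (norm (x1 - w))\<^sup>2) / (2 * \<tau>)"
    using err2 by (simp add: field_simps)
  thus ?thesis by (simp add: a_def)
qed

lemma hpe_step_dist:
  fixes x0 y v z :: "'a::real_inner"
  assumes err: "norm (lm *\<^sub>R v + y - x0) \<le> \<sigma> * norm (y - x0)"
    and lm: "lm > 0" and v: "inner v (y - z) \<ge> 0" and \<sigma>: "0 \<le> \<sigma>"
  shows "(1 - \<sigma>\<^sup>2) * (norm (y - z))\<^sup>2 \<le> (norm (x0 - z))\<^sup>2"
proof -
  define a where "a = y - x0"
  define t where "t = norm (y - z)"
  have "inner a (y - z) = inner (lm *\<^sub>R v + a) (y - z) - lm * inner v (y - z)"
    by (simp add: inner_add_left)
  also have "\<dots> \<le> norm (lm *\<^sub>R v + a) * t"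
    using norm_cauchy_schwarz[of "lm *\<^sub>R v + a" "y - z"] mult_nonneg_nonneg[OF less_imp_le[OF lm] v]
    by (simp add: t_def)
  also have "\<dots> \<le> \<sigma> * norm a * t"
    using err by (intro mult_right_mono) (auto simp: a_def t_def algebra_simps)
  finally have "inner a (y - z) \<le> \<sigma> * norm a * t" .
  moreover have "(norm (x0 - z))\<^sup>2 = t\<^sup>2 - 2 * inner a (y - z) + (norm a)\<^sup>2"
    unfolding t_def a_def by (simp add: power2_norm_eq_inner inner_diff_left inner_diff_right inner_commute)
  moreover have "t\<^sup>2 - 2 * \<sigma> * norm a * t + (norm a)\<^sup>2 = (1 - \<sigma>\<^sup>2) * t\<^sup>2 + (norm a - \<sigma> * t)\<^sup>2"
    by (simp add: power2_eq_square algebra_simps)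
  ultimately show ?thesis
    using zero_le_power2[of "norm a - \<sigma> * t"] unfolding t_def by linarith
qed

lemma card_cube_le_sum_square_mult_sum_inverse:
  fixes \<alpha> :: "nat \<Rightarrow> real"
  assumes \<alpha>: "\<And>l. l \<in> {1..k} \<Longrightarrow> \<alpha> l > 0"
  shows "(real k)^3 \<le> (\<Sum>l=1..k. (\<alpha> l)\<^sup>2) * (\<Sum>l=1..k. 1 / \<alpha> l)\<^sup>2"
proof -
  have \<alpha>0: "\<And>l. l \<in> {1..k} \<Longrightarrow> \<alpha> l \<ge> 0" and \<alpha>ne: "\<And>l. l \<in> {1..k} \<Longrightarrow> \<alpha> l \<noteq> 0"
    using \<alpha> by (metis less_imp_le, metis order_less_irrefl)
  define S1 where "S1 = (\<Sum>l=1..k. \<alpha> l)"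
  define S2 where "S2 = (\<Sum>l=1..k. (\<alpha> l)\<^sup>2)"
  define S3 where "S3 = (\<Sum>l=1..k. 1 / \<alpha> l)"
  have "S1\<^sup>2 \<le> real k * S2"
    using Cauchy_Schwarz_ineq_sum[of "\<lambda>_. 1" \<alpha> "{1..k}"] by (simp add: S1_def S2_def)
  moreover have "(real k)\<^sup>2 \<le> S1 * S3"
  proof -
    have "(\<Sum>l=1..k. sqrt (\<alpha> l) * (1 / sqrt (\<alpha> l)))\<^sup>2
        \<le> (\<Sum>l=1..k. (sqrt (\<alpha> l))\<^sup>2) * (\<Sum>l=1..k. (1 / sqrt (\<alpha> l))\<^sup>2)"
      by (rule Cauchy_Schwarz_ineq_sum)
    also have "(\<Sum>l=1..k. sqrt (\<alpha> l) * (1 / sqrt (\<alpha> l))) = (\<Sum>l=1..k. 1)"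
      using \<alpha>0 \<alpha>ne by (intro sum.cong) auto
    also have "(\<Sum>l=1..k. (sqrt (\<alpha> l))\<^sup>2) = S1"
      unfolding S1_def using \<alpha>0 by (intro sum.cong) auto
    also have "(\<Sum>l=1..k. (1 / sqrt (\<alpha> l))\<^sup>2) = S3"
      unfolding S3_def using \<alpha>0 by (intro sum.cong) (auto simp: power_divide)
    finally show ?thesis by simp
  qed
  moreover have "S1 \<ge> 0" "S3 \<ge> 0"
    unfolding S1_def S3_def using \<alpha>0 by (auto intro!: sum_nonneg)
  ultimately have "real k * (real k)^3 \<le> real k * (S2 * S3\<^sup>2)"
    using power_mono[of "(real k)\<^sup>2" "S1 * S3" 2] mult_right_mono[of "S1\<^sup>2" "real k * S2" "S3\<^sup>2"]
    by (simp add: power2_eq_square power3_eq_cube algebra_simps)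
  thus ?thesis by (cases "k = 0") (auto simp: S2_def S3_def)
qed

lemma powr_three_halves: "(x::real) \<ge> 0 \<Longrightarrow> x powr (3/2) = x * sqrt x"
  by (cases "x = 0") (simp_all add: powr_add[of x 1 "1/2", simplified] powr_half_sqrt)

locale large_step_hpe =
  fixes X Y V :: "nat \<Rightarrow> 'a::real_inner" and lm :: "nat \<Rightarrow> real" and k :: nat and \<tau> \<sigma> \<eta> :: real
  assumes extragradient: "\<And>l. l \<in> {1..k} \<Longrightarrow> X l = X (l - 1) - (\<tau> * lm l) *\<^sub>R V l"
    and relative_error:
      "\<And>l. l \<in> {1..k} \<Longrightarrow> norm (lm l *\<^sub>R V l + Y l - X (l - 1)) \<le> \<sigma> * norm (Y l - X (l - 1))"
    and lm_pos: "\<And>l. l \<in> {1..k} \<Longrightarrow> lm l > 0"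
    and large_step: "\<And>l. l \<in> {1..k} \<Longrightarrow> lm l * norm (Y l - X (l - 1)) \<ge> \<eta>"
    and \<tau>: "0 < \<tau>" "\<tau> \<le> 1" and \<sigma>: "0 \<le> \<sigma>" "\<sigma> < 1" and \<eta>: "\<eta> > 0" and k: "k \<ge> 1"
begin

lemma one_minus_sigma_square_pos: "1 - \<sigma>\<^sup>2 > 0"
  using \<sigma> by (simp add: abs_square_less_1)

lemma sum_step_estimate:
  "(\<Sum>l=1..k. lm l * inner (Y l - w) (V l) + (1 - \<sigma>\<^sup>2) / 2 * (norm (Y l - X (l - 1)))\<^sup>2)
    \<le> ((norm (X 0 - w))\<^sup>2 - (norm (X k - w))\<^sup>2) / (2 * \<tau>)"
proof -
  have "(\<Sum>l=1..k. lm l * inner (Y l - w) (V l) + (1 - \<sigma>\<^sup>2) / 2 * (norm (Y l - X (l - 1)))\<^sup>2)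
      \<le> (\<Sum>l=1..k. (norm (X (l - 1) - w))\<^sup>2 - (norm (X l - w))\<^sup>2) / (2 * \<tau>)"
    unfolding sum_divide_distrib
    using hpe_step_estimate[OF extragradient relative_error \<tau> \<sigma>(1)] by (intro sum_mono)
  also have "\<dots> = ((norm (X 0 - w))\<^sup>2 - (norm (X k - w))\<^sup>2) / (2 * \<tau>)"
    using sum_telescope''[of 0 k "\<lambda>l. - (norm (X l - w))\<^sup>2"] by simp
  finally show ?thesis .
qed

lemma sum_inner_le:
  "(\<Sum>l=1..k. lm l * inner (Y l - w) (V l)) \<le> ((norm (X 0 - w))\<^sup>2 - (norm (X k - w))\<^sup>2) / (2 * \<tau>)"
proof -
  have "(\<Sum>l=1..k. lm l * inner (Y l - w) (V l))
      \<le> (\<Sum>l=1..k. lm l * inner (Y l - w) (V l) + (1 - \<sigma>\<^sup>2) / 2 * (norm (Y l - X (l - 1)))\<^sup>2)"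
    using one_minus_sigma_square_pos by (intro sum_mono) simp
  also have "\<dots> \<le> ((norm (X 0 - w))\<^sup>2 - (norm (X k - w))\<^sup>2) / (2 * \<tau>)"
    by (rule sum_step_estimate)
  finally show ?thesis .
qed

lemma scaled_sum_V: "\<tau> *\<^sub>R (\<Sum>l=1..k. lm l *\<^sub>R V l) = X 0 - X k"
proof -
  have "\<tau> *\<^sub>R (\<Sum>l=1..k. lm l *\<^sub>R V l) = (\<Sum>l=1..k. - X l - - X (l - 1))"
    unfolding scaleR_sum_right by (intro sum.cong) (auto simp: extragradient)
  also have "\<dots> = X 0 - X k" using sum_telescope''[of 0 k "\<lambda>l. - X l"] by simp
  finally show ?thesis .
qed

lemma Lambda_pos: "erg_Lambda lm id k > 0"
  unfolding erg_Lambda_def using k lm_pos by (intro sum_pos) auto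

lemma step_length_pos:
  assumes l: "l \<in> {1..k}"
  shows "norm (Y l - X (l - 1)) > 0"
proof (rule ccontr)
  assume "\<not> ?thesis"
  hence "norm (Y l - X (l - 1)) = 0" by simp
  thus False using large_step[OF l] \<eta> by simp
qed

lemma norm_V_le_step_length:
  assumes l: "l \<in> {1..k}"
  shows "\<eta> * norm (V l) \<le> (1 + \<sigma>) * (norm (Y l - X (l - 1)))\<^sup>2"
proof -
  define \<alpha> where "\<alpha> = norm (Y l - X (l - 1))"
  have "lm l * norm (V l) = norm (lm l *\<^sub>R V l)" using lm_pos[OF l] by simp
  also have "\<dots> \<le> norm (lm l *\<^sub>R V l + Y l - X (l - 1)) + norm (Y l - X (l - 1))"
    using norm_triangle_ineq4[of "lm l *\<^sub>R V l + Y l - X (l - 1)" "Y l - X (l - 1)"] by simp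
  also have "\<dots> \<le> (1 + \<sigma>) * \<alpha>" using relative_error[OF l] by (simp add: \<alpha>_def algebra_simps)
  finally have V: "lm l * norm (V l) \<le> (1 + \<sigma>) * \<alpha>" .
  have "\<eta> * norm (V l) \<le> (lm l * \<alpha>) * norm (V l)"
    using large_step[OF l] by (intro mult_right_mono) (auto simp: \<alpha>_def)
  also have "\<dots> = (lm l * norm (V l)) * \<alpha>" by simp
  also have "\<dots> \<le> ((1 + \<sigma>) * \<alpha>) * \<alpha>" using V by (intro mult_right_mono) (auto simp: \<alpha>_def)
  finally show ?thesis by (simp add: \<alpha>_def power2_eq_square mult.assoc)
qed

end

locale large_step_hpe_solution = large_step_hpe +
  fixes z :: "'a::real_inner"
  assumes solution: "\<And>l. l \<in> {1..k} \<Longrightarrow> inner (V l) (Y l - z) \<ge> 0"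
begin

lemma weighted_inner_nonneg: "l \<in> {1..k} \<Longrightarrow> 0 \<le> lm l * inner (Y l - z) (V l)"
  using solution lm_pos by (metis inner_commute less_imp_le mult_nonneg_nonneg)

lemma dist_X_le: "l \<le> k \<Longrightarrow> norm (X l - z) \<le> norm (X 0 - z)"
proof (induction l)
  case (Suc l)
  have l: "Suc l \<in> {1..k}" using Suc.prems by simp
  from weighted_inner_nonneg[OF l]
  have "0 \<le> ((norm (X l - z))\<^sup>2 - (norm (X (Suc l) - z))\<^sup>2) / (2 * \<tau>)"
    using hpe_step_estimate[OF extragradient[OF l] relative_error[OF l] \<tau> \<sigma>(1), of z]
      one_minus_sigma_square_pos
    by (smt (verit) diff_Suc_1 mult_nonneg_nonneg zero_le_power2 divide_nonneg_pos)
  hence "norm (X (Suc l) - z) \<le> norm (X l - z)"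
    using \<tau> by (simp add: zero_le_divide_iff)
  thus ?case using Suc by simp
qed simp

lemma sum_sq_step_le: "(1 - \<sigma>\<^sup>2) * \<tau> * (\<Sum>l=1..k. (norm (Y l - X (l - 1)))\<^sup>2) \<le> (norm (X 0 - z))\<^sup>2"
proof -
  have "(1 - \<sigma>\<^sup>2) / 2 * (\<Sum>l=1..k. (norm (Y l - X (l - 1)))\<^sup>2)
      \<le> (\<Sum>l=1..k. lm l * inner (Y l - z) (V l) + (1 - \<sigma>\<^sup>2) / 2 * (norm (Y l - X (l - 1)))\<^sup>2)"
    unfolding sum_distrib_left using weighted_inner_nonneg by (intro sum_mono) simp
  also have "\<dots> \<le> ((norm (X 0 - z))\<^sup>2 - (norm (X k - z))\<^sup>2) / (2 * \<tau>)"
    by (rule sum_step_estimate)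
  also have "\<dots> \<le> (norm (X 0 - z))\<^sup>2 / (2 * \<tau>)"
    using \<tau> by (simp add: divide_right_mono)
  finally show ?thesis using \<tau> by (simp add: field_simps)
qed

lemma dist_Y_le:
  assumes l: "l \<in> {1..k}"
  shows "sqrt (1 - \<sigma>\<^sup>2) * norm (Y l - z) \<le> norm (X 0 - z)"
proof -
  have "(sqrt (1 - \<sigma>\<^sup>2) * norm (Y l - z))\<^sup>2 = (1 - \<sigma>\<^sup>2) * (norm (Y l - z))\<^sup>2"
    using one_minus_sigma_square_pos by (simp add: power_mult_distrib)
  also have "\<dots> \<le> (norm (X (l - 1) - z))\<^sup>2"
    using hpe_step_dist[OF relative_error[OF l] lm_pos[OF l] solution[OF l] \<sigma>(1)] .
  also have "\<dots> \<le> (norm (X 0 - z))\<^sup>2"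
    using dist_X_le[of "l - 1"] l by (intro power_mono) auto
  finally show ?thesis by (rule power2_le_imp_le) simp
qed

lemma Lambda_lower_bound:
  "\<eta> * sqrt (\<tau> * (1 - \<sigma>\<^sup>2)) * real k powr (3/2) \<le> norm (X 0 - z) * erg_Lambda lm id k"
proof -
  define \<alpha> where "\<alpha> l = norm (Y l - X (l - 1))" for l
  define S where "S = (\<Sum>l=1..k. 1 / \<alpha> l)"
  have \<alpha>: "\<And>l. l \<in> {1..k} \<Longrightarrow> \<alpha> l > 0" unfolding \<alpha>_def by (rule step_length_pos)
  have "\<eta> / \<alpha> l \<le> lm l" if "l \<in> {1..k}" for l
    using large_step[OF that] \<alpha>[OF that] by (simp add: \<alpha>_def pos_divide_le_eq)
  hence \<Lambda>: "\<eta> * S \<le> erg_Lambda lm id k"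
    unfolding S_def erg_Lambda_def sum_distrib_left by (intro sum_mono) simp
  have S: "S \<ge> 0" unfolding S_def using \<alpha> by (intro sum_nonneg) (simp add: less_imp_le)
  have \<alpha>2: "(1 - \<sigma>\<^sup>2) * \<tau> * (\<Sum>l=1..k. (\<alpha> l)\<^sup>2) \<le> (norm (X 0 - z))\<^sup>2"
    unfolding \<alpha>_def by (rule sum_sq_step_le)
  have "(sqrt (\<tau> * (1 - \<sigma>\<^sup>2)))\<^sup>2 = \<tau> * (1 - \<sigma>\<^sup>2)"
    using \<tau> one_minus_sigma_square_pos by simp
  moreover have "(real k powr (3/2))\<^sup>2 = (real k)^3"
    by (simp add: powr_three_halves power_mult_distrib power2_eq_square power3_eq_cube)
  ultimately have "(\<eta> * sqrt (\<tau> * (1 - \<sigma>\<^sup>2)) * real k powr (3/2))\<^sup>2 = \<tau> * (1 - \<sigma>\<^sup>2) * \<eta>\<^sup>2 * (real k)^3"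
    by (simp add: power_mult_distrib)
  also have "\<dots> \<le> \<tau> * (1 - \<sigma>\<^sup>2) * \<eta>\<^sup>2 * ((\<Sum>l=1..k. (\<alpha> l)\<^sup>2) * S\<^sup>2)"
    unfolding S_def using \<tau> one_minus_sigma_square_pos
    by (intro mult_left_mono card_cube_le_sum_square_mult_sum_inverse \<alpha>) simp_all
  also have "\<dots> = ((1 - \<sigma>\<^sup>2) * \<tau> * (\<Sum>l=1..k. (\<alpha> l)\<^sup>2)) * (\<eta> * S)\<^sup>2"
    by (simp add: power_mult_distrib)
  also have "\<dots> \<le> (norm (X 0 - z))\<^sup>2 * (erg_Lambda lm id k)\<^sup>2"
    using S \<eta> by (intro mult_mono[OF \<alpha>2] power_mono[OF \<Lambda>]) simp_all
  also have "\<dots> = (norm (X 0 - z) * erg_Lambda lm id k)\<^sup>2" by (simp add: power_mult_distrib)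
  finally show ?thesis
    by (rule power2_le_imp_le) (use Lambda_pos in simp)
qed

lemma inverse_Lambda_le:
  "1 / erg_Lambda lm id k \<le> norm (X 0 - z) / (\<eta> * sqrt (\<tau> * (1 - \<sigma>\<^sup>2)) * real k powr (3/2))"
proof -
  have "0 < \<eta> * sqrt (\<tau> * (1 - \<sigma>\<^sup>2)) * real k powr (3/2)"
    using \<eta> \<tau> one_minus_sigma_square_pos k by simp
  thus ?thesis using Lambda_lower_bound Lambda_pos by (simp add: field_simps)
qed

lemma min_norm_V_le:
  "Min ((\<lambda>l. norm (V l)) ` {1..k}) \<le> (norm (X 0 - z))\<^sup>2 / (\<tau> * \<eta> * (1 - \<sigma>) * real k)"
proof -
  define m where "m = Min ((\<lambda>l. norm (V l)) ` {1..k})"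
  have "real k * (\<eta> * m) = (\<Sum>l=1..k. \<eta> * m)" by simp
  also have "\<dots> \<le> (\<Sum>l=1..k. (1 + \<sigma>) * (norm (Y l - X (l - 1)))\<^sup>2)"
  proof (intro sum_mono)
    fix l assume l: "l \<in> {1..k}"
    have "\<eta> * m \<le> \<eta> * norm (V l)" using \<eta> l by (intro mult_left_mono) (auto simp: m_def)
    also have "\<dots> \<le> (1 + \<sigma>) * (norm (Y l - X (l - 1)))\<^sup>2" by (rule norm_V_le_step_length[OF l])
    finally show "\<eta> * m \<le> (1 + \<sigma>) * (norm (Y l - X (l - 1)))\<^sup>2" .
  qed
  also have "\<dots> = (1 + \<sigma>) * (\<Sum>l=1..k. (norm (Y l - X (l - 1)))\<^sup>2)" by (simp add: sum_distrib_left)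
  also have "\<dots> \<le> (1 + \<sigma>) * ((norm (X 0 - z))\<^sup>2 / ((1 - \<sigma>\<^sup>2) * \<tau>))"
    using sum_sq_step_le one_minus_sigma_square_pos \<tau> \<sigma>
    by (intro mult_left_mono) (simp_all add: pos_le_divide_eq mult.commute)
  also have "\<dots> = ((1 + \<sigma>) * (norm (X 0 - z))\<^sup>2) / ((1 + \<sigma>) * ((1 - \<sigma>) * \<tau>))"
    by (simp add: power2_eq_square algebra_simps)
  also have "\<dots> = (norm (X 0 - z))\<^sup>2 / ((1 - \<sigma>) * \<tau>)"
    using \<sigma> by (intro mult_divide_mult_cancel_left) simp
  finally have "real k * (\<eta> * m) \<le> (norm (X 0 - z))\<^sup>2 / ((1 - \<sigma>) * \<tau>)" .
  thus ?thesis using k \<eta> \<tau> \<sigma> by (simp add: m_def field_simps)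
qed

lemma norm_erg_avg_V_le:
  "norm (erg_avg lm id V k)
    \<le> 2 * (norm (X 0 - z))\<^sup>2 / (\<tau> powr (3/2) * \<eta> * sqrt (1 - \<sigma>\<^sup>2) * real k powr (3/2))"
proof -
  define D where "D = norm (X 0 - z)"
  have "erg_avg lm id V k = (1 / erg_Lambda lm id k) *\<^sub>R ((1 / \<tau>) *\<^sub>R (X 0 - X k))"
    using \<tau> by (simp add: erg_avg_def flip: scaleR_sum_right scaled_sum_V)
  hence "norm (erg_avg lm id V k) = norm (X 0 - X k) / \<tau> * (1 / erg_Lambda lm id k)"
    using \<tau> Lambda_pos by simp
  also have "\<dots> \<le> 2 * D / \<tau> * (D / (\<eta> * sqrt (\<tau> * (1 - \<sigma>\<^sup>2)) * real k powr (3/2)))"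
  proof (intro mult_mono divide_right_mono inverse_Lambda_le[folded D_def])
    show "norm (X 0 - X k) \<le> 2 * D"
      using norm_triangle_ineq4[of "X 0 - z" "X k - z"] dist_X_le[of k] by (simp add: D_def)
  qed (use \<tau> Lambda_pos in \<open>auto simp: D_def\<close>)
  also have "\<dots> = 2 * D\<^sup>2 / (\<tau> powr (3/2) * \<eta> * sqrt (1 - \<sigma>\<^sup>2) * real k powr (3/2))"
    unfolding real_sqrt_mult using \<tau> by (simp add: powr_three_halves power2_eq_square field_simps)
  finally show ?thesis by (simp add: D_def)
qed

lemma dist_erg_avg_Y_le: "sqrt (1 - \<sigma>\<^sup>2) * norm (erg_avg lm id Y k - z) \<le> norm (X 0 - z)"
proof -
  have "erg_avg lm id Y k \<in> cball z (norm (X 0 - z) / sqrt (1 - \<sigma>\<^sup>2))"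
    using dist_Y_le lm_pos one_minus_sigma_square_pos
    by (intro erg_avg_in_convex Lambda_pos) (auto simp: dist_norm norm_minus_commute field_simps less_imp_le)
  thus ?thesis using one_minus_sigma_square_pos by (simp add: dist_norm norm_minus_commute field_simps)
qed

lemma Lambda_erg_eps_le:
  "erg_Lambda lm id k * erg_eps lm id Y V k \<le> 2 * (norm (X 0 - z))\<^sup>2 / (\<tau> * sqrt (1 - \<sigma>\<^sup>2))"
proof -
  define D Dk s ya where "D = norm (X 0 - z)" and "Dk = norm (X k - z)" and "s = sqrt (1 - \<sigma>\<^sup>2)"
    and "ya = erg_avg lm id Y k"
  have s: "0 < s" "s \<le> 1" using one_minus_sigma_square_pos by (auto simp: s_def)
  have Dk: "0 \<le> Dk" "Dk \<le> D" using dist_X_le[of k] by (auto simp: D_def Dk_def)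
  have ya: "norm (z - ya) \<le> D / s"
    using dist_erg_avg_Y_le s by (simp add: D_def s_def ya_def norm_minus_commute field_simps)
  have "erg_Lambda lm id k * erg_eps lm id Y V k = (\<Sum>l=1..k. lm l * inner (Y l - ya) (V l))"
    using erg_inner_decomposition[where lam = lm and i = id and y = Y and g = V and z = ya and u = 0]
      Lambda_pos by (simp add: ya_def)
  also have "\<dots> \<le> ((norm (X 0 - ya))\<^sup>2 - (norm (X k - ya))\<^sup>2) / (2 * \<tau>)" by (rule sum_inner_le)
  also have "(norm (X 0 - ya))\<^sup>2 - (norm (X k - ya))\<^sup>2 = D\<^sup>2 - Dk\<^sup>2 + 2 * inner (X 0 - X k) (z - ya)"
    by (simp add: D_def Dk_def power2_norm_eq_inner inner_diff_left inner_diff_right inner_commute)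
  also have "inner (X 0 - X k) (z - ya) \<le> (D + Dk) * (D / s)"
  proof -
    have "norm (X 0 - X k) \<le> D + Dk"
      using norm_triangle_ineq4[of "X 0 - z" "X k - z"] by (simp add: D_def Dk_def)
    thus ?thesis using norm_cauchy_schwarz[of "X 0 - X k" "z - ya"] ya Dk
      by (smt (verit) mult_mono norm_ge_zero)
  qed
  also have "D\<^sup>2 - Dk\<^sup>2 + 2 * ((D + Dk) * (D / s)) \<le> 4 * D * (D / s)"
  proof -
    \<comment> \<open>the left-hand side increases with \<open>Dk \<in> [0, D]\<close> because \<open>D \<le> D / s\<close>\<close>
    have "D * s \<le> D" using s Dk mult_left_le[of s D] by simp
    hence "D \<le> D / s" using s by (simp add: le_divide_eq)
    hence "0 \<le> (D - Dk) * (2 * (D / s) - D - Dk)" using Dk by simp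
    moreover have eq: "D\<^sup>2 - Dk\<^sup>2 + 2 * ((D + Dk) * t) = 4 * D * t - (D - Dk) * (2 * t - D - Dk)" for t
      by (simp add: power2_eq_square algebra_simps)
    ultimately show ?thesis unfolding eq[of "D / s"] by linarith
  qed
  also have "4 * D * (D / s) / (2 * \<tau>) = 2 * D\<^sup>2 / (\<tau> * s)"
    using \<tau> s by (simp add: power2_eq_square field_simps)
  finally show ?thesis using \<tau> by (simp add: D_def s_def divide_right_mono id_def)
qed

lemma erg_eps_le:
  "erg_eps lm id Y V k
    \<le> 2 * norm (X 0 - z) ^ 3 / (\<tau> powr (3/2) * \<eta> * (1 - \<sigma>\<^sup>2) * real k powr (3/2))"
proof -
  define D where "D = norm (X 0 - z)"
  have "erg_eps lm id Y V k = erg_Lambda lm id k * erg_eps lm id Y V k * (1 / erg_Lambda lm id k)"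
    using Lambda_pos by simp
  also have "\<dots> \<le> 2 * D\<^sup>2 / (\<tau> * sqrt (1 - \<sigma>\<^sup>2)) * (D / (\<eta> * sqrt (\<tau> * (1 - \<sigma>\<^sup>2)) * real k powr (3/2)))"
    using Lambda_erg_eps_le inverse_Lambda_le Lambda_pos \<tau> one_minus_sigma_square_pos
    by (intro mult_mono) (simp_all add: D_def)
  also have "\<dots> = 2 * D ^ 3 / (\<tau> powr (3/2) * \<eta> * (1 - \<sigma>\<^sup>2) * real k powr (3/2))"
    unfolding real_sqrt_mult using \<tau> one_minus_sigma_square_pos
    by (simp add: powr_three_halves power2_eq_square power3_eq_cube field_simps)
  finally show ?thesis by (simp add: D_def)
qed

end

section \<open>Algorithm 2\<close>

lemma le_at_infdist:
  fixes x :: "'a::metric_space" and f :: "real \<Rightarrow> real"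
  assumes S: "S \<noteq> {}" and f: "continuous_on UNIV f" and Q: "\<And>z. z \<in> S \<Longrightarrow> Q \<le> f (dist x z)"
  shows "Q \<le> f (infdist x S)"
proof -
  have "infdist x S \<in> closure (dist x ` S)"
    unfolding infdist_notempty[OF S] using S by (intro closure_contains_Inf) (auto intro: bdd_belowI)
  also have "\<dots> \<subseteq> {t. Q \<le> f t}"
    using Q by (intro closure_minimal closed_Collect_le[OF continuous_on_const f]) auto
  finally show ?thesis by simp
qed

lemma idx_i_enumerates:
  fixes A :: "nat set"
  assumes k: "k \<in> idxK A" and A0: "0 \<notin> A" and l: "l \<in> {1..k}"
  shows idx_i_in: "idx_i A l \<in> A"
    and idx_i_pred_less: "idx_i A (l - 1) < idx_i A l"
    and idx_i_gap: "idx_i A (l - 1) < m \<Longrightarrow> m < idx_i A l \<Longrightarrow> m \<notin> A"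
proof -
  define P where "P j \<longleftrightarrow> infinite A \<or> j < card A" for j
  have in_A: "P j \<Longrightarrow> enumerate A j \<in> A" for j
    by (metis P_def enumerate_in_set finite_enumerate_in_set)
  have mono: "j < j' \<Longrightarrow> P j' \<Longrightarrow> enumerate A j < enumerate A j'" for j j'
    by (metis P_def enumerate_mono finite_enumerate_mono)
  have onto: "m \<in> A \<Longrightarrow> \<exists>j. P j \<and> enumerate A j = m" for m
    using enumerate_Ex finite_enumerate_Ex by (metis P_def)
  have Pl: "P (l - 1)" and Pl2: "P (l - 2)" using k l by (auto simp: P_def idxK_def)
  have il: "idx_i A l = enumerate A (l - 1)" using l by (simp add: idx_i_def)
  have il': "idx_i A (l - 1) = enumerate A (l - 2)" if "l \<ge> 2" using that
    by (simp add: idx_i_def numeral_2_eq_2)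
  show "idx_i A l \<in> A" using in_A[OF Pl] il by simp
  show "idx_i A (l - 1) < idx_i A l"
  proof (cases "l \<ge> 2")
    case True thus ?thesis using mono[OF _ Pl] il il' by simp
  next
    case False
    hence "l = 1" using l by simp
    thus ?thesis using in_A[OF Pl] A0 by (simp add: idx_i_def) (metis neq0_conv)
  qed
  show "m \<notin> A" if "idx_i A (l - 1) < m" "m < idx_i A l"
  proof
    assume "m \<in> A"
    then obtain j where j: "P j" "enumerate A j = m" using onto by blast
    have "j < l - 1" using that(2) mono[of "l - 1" j] j il by (cases "j \<le> l - 1") (auto simp: le_less)
    hence "l \<ge> 2" "j \<le> l - 2" by auto
    hence "enumerate A j \<le> enumerate A (l - 2)" using mono[OF _ Pl2, of j] by (cases "j = l - 2") auto
    thus False using that(1) j il' \<open>l \<ge> 2\<close> by simp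
  qed
qed

lemma idx_i_0 [simp]: "idx_i A 0 = 0"
  by (simp add: idx_i_def)

lemma mem_idxA: "n \<in> idxA x y lam \<eta> \<longleftrightarrow> n \<ge> 1 \<and> \<eta> \<le> lam n * norm (y n - x (n - 1))"
  by (simp add: idxA_def)

locale alg2_parameters =
  fixes L \<sigma>h \<theta> \<eta> :: real
  assumes L_pos: "L > 0"
    and \<sigma>h: "0 \<le> \<sigma>h" "\<sigma>h < 1/2"
    and \<theta>: "0 < \<theta>" "\<theta> < (1 - \<sigma>h) * (1 - 2 * \<sigma>h)"
    and \<eta>: "\<eta> > 2 * thetahat \<theta> \<sigma>h / L"
begin

abbreviation "\<theta>h \<equiv> thetahat \<theta> \<sigma>h"
abbreviation "\<tau> \<equiv> tau \<theta> \<sigma>h \<eta> L"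
abbreviation "\<sigma> \<equiv> 2 * \<theta>h / (\<eta> * L)"

lemma thetahat_nonneg: "\<theta>h \<ge> 0"
  unfolding thetahat_def using \<sigma>h \<theta> by simp

lemma thetahat_less: "\<theta>h < \<theta>"
proof -
  have "\<sigma>h / (1 - \<sigma>h) = \<sigma>h * (1 - \<sigma>h) / (1 - \<sigma>h)\<^sup>2"
    using \<sigma>h by (simp add: power2_eq_square)
  hence "\<sigma>h / (1 - \<sigma>h) + \<theta> / (1 - \<sigma>h)\<^sup>2 = (\<sigma>h * (1 - \<sigma>h) + \<theta>) / (1 - \<sigma>h)\<^sup>2"
    by (simp add: add_divide_distrib)
  also have "\<dots> < 1" using \<sigma>h \<theta> by (simp add: power2_eq_square algebra_simps)
  finally show ?thesis unfolding thetahat_def using \<theta> by simp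
qed

lemma eta_pos: "\<eta> > 0"
  using \<eta> thetahat_nonneg L_pos by (smt (verit) divide_nonneg_pos)

lemma sigma_nonneg: "\<sigma> \<ge> 0"
  using thetahat_nonneg eta_pos L_pos by simp

lemma sigma_less_one: "\<sigma> < 1"
  using \<eta> eta_pos L_pos by (simp add: field_simps)

text \<open>\<open>\<tau>\<close> is the smaller root of \<open>\<theta> t\<^sup>2 - (2\<theta> + \<eta>L/2) t + (\<theta> - \<theta>h) = 0\<close>, written with a
  rationalised numerator.\<close>

lemma
  shows tau_pos: "0 < \<tau>" and tau_less_one: "\<tau> < 1"
    and tau_root: "\<theta>h + \<tau> * \<eta> * L / 2 = \<theta> * (1 - \<tau>)\<^sup>2"
proof -
  define b where "b = 2 * \<theta> + \<eta> * L / 2"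
  define c where "c = \<theta> - \<theta>h"
  define s where "s = sqrt (b\<^sup>2 - 4 * \<theta> * c)"
  have c: "0 < c" "c \<le> \<theta>" using thetahat_less thetahat_nonneg by (auto simp: c_def)
  have b: "b > 2 * \<theta>" using eta_pos L_pos by (simp add: b_def)
  have "4 * \<theta> * c \<le> (2 * \<theta>)\<^sup>2" using c \<theta> by (simp add: power2_eq_square)
  also have "\<dots> < b\<^sup>2" using b \<theta> by (intro power_strict_mono) auto
  finally have "4 * \<theta> * c < b\<^sup>2" .
  hence s: "s \<ge> 0" "s\<^sup>2 = b\<^sup>2 - 4 * \<theta> * c" by (auto simp: s_def)
  have bs: "b + s > 0" using b \<theta> s by simp
  have tau: "\<tau> = 2 * c / (b + s)" by (simp add: tau_def Let_def b_def c_def s_def)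
  show "0 < \<tau>" using c bs by (simp add: tau)
  show "\<tau> < 1" using c b s \<theta> by (simp add: tau)
  have \<tau>bs: "\<tau> * (b + s) = 2 * c" using bs by (simp add: tau)
  have "(\<theta> * \<tau>\<^sup>2 - b * \<tau> + c) * (b + s)\<^sup>2
      = \<theta> * (\<tau> * (b + s))\<^sup>2 - b * (\<tau> * (b + s)) * (b + s) + c * (b + s)\<^sup>2"
    by (simp add: power2_eq_square algebra_simps)
  also have "\<dots> = c * (4 * \<theta> * c - b\<^sup>2 + s\<^sup>2)"
    unfolding \<tau>bs by (simp add: power2_eq_square algebra_simps)
  finally have "(\<theta> * \<tau>\<^sup>2 - b * \<tau> + c) * (b + s)\<^sup>2 = c * (4 * \<theta> * c - b\<^sup>2 + s\<^sup>2)" .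
  hence "\<theta> * \<tau>\<^sup>2 - b * \<tau> + c = 0" using s bs by simp
  thus "\<theta>h + \<tau> * \<eta> * L / 2 = \<theta> * (1 - \<tau>)\<^sup>2"
    by (simp add: b_def c_def power2_eq_square algebra_simps)
qed

lemma null_step_residual:
  fixes v a :: "'a::real_normed_vector"
  assumes lam: "lam > 0" and res: "lam * L / 2 * norm (lam *\<^sub>R v + a) \<le> \<theta>h"
    and short: "lam * norm a \<le> \<eta>"
  shows "lam / (1 - \<tau>) * L / 2 * norm ((lam / (1 - \<tau>)) *\<^sub>R v + a) \<le> \<theta>"
proof -
  define q where "q = 1 - \<tau>"
  have q: "0 < q" using tau_less_one by (simp add: q_def)
  have "(1 / q) *\<^sub>R a - (\<tau> / q) *\<^sub>R a = a"
    using q by (simp add: q_def flip: scaleR_diff_left diff_divide_distrib)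
  moreover have "(1 / q) *\<^sub>R (lam *\<^sub>R v + a) - (\<tau> / q) *\<^sub>R a
      = (lam / q) *\<^sub>R v + ((1 / q) *\<^sub>R a - (\<tau> / q) *\<^sub>R a)"
    by (simp add: algebra_simps)
  ultimately have "(lam / q) *\<^sub>R v + a = (1 / q) *\<^sub>R (lam *\<^sub>R v + a) - (\<tau> / q) *\<^sub>R a"
    by simp
  hence "norm ((lam / q) *\<^sub>R v + a) \<le> (norm (lam *\<^sub>R v + a) + \<tau> * norm a) / q"
    using q tau_pos norm_triangle_ineq4[of "(1 / q) *\<^sub>R (lam *\<^sub>R v + a)" "(\<tau> / q) *\<^sub>R a"]
    by (simp add: add_divide_distrib)
  hence "lam / q * L / 2 * norm ((lam / q) *\<^sub>R v + a)
      \<le> lam / q * L / 2 * ((norm (lam *\<^sub>R v + a) + \<tau> * norm a) / q)"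
    using lam q L_pos by (intro mult_left_mono) auto
  also have "\<dots> = (lam * L / 2 * norm (lam *\<^sub>R v + a) + \<tau> * L / 2 * (lam * norm a)) / q\<^sup>2"
    using q by (simp add: power2_eq_square field_simps)
  also have "\<dots> \<le> (\<theta>h + \<tau> * L / 2 * \<eta>) / q\<^sup>2"
    using res short tau_pos L_pos by (intro divide_right_mono add_mono mult_left_mono) auto
  also have "\<dots> = \<theta>" using tau_root q by (simp add: q_def field_simps)
  finally show ?thesis by (simp add: q_def)
qed

end

locale alg2_run = alg2_parameters L \<sigma>h \<theta> \<eta>
  for L \<sigma>h \<theta> \<eta> :: real +
  fixes F :: "'a::real_inner \<Rightarrow> 'a" and F' :: "'a \<Rightarrow> 'a \<Rightarrow>\<^sub>L 'a" and C :: "'a set"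
    and x y \<nu> :: "nat \<Rightarrow> 'a" and lam :: "nat \<Rightarrow> real"
  assumes C_convex: "convex C"
    and F_mono: "\<forall>u\<in>C. \<forall>w\<in>C. inner (F u - F w) (u - w) \<ge> 0"
    and F_deriv: "\<forall>u\<in>C. (F has_derivative blinfun_apply (F' u)) (at u within C)"
    and F'_lip: "\<forall>u\<in>C. \<forall>w\<in>C. norm (F' u - F' w) \<le> L * norm (u - w)"
    and alg: "alg2 F F' C L \<sigma>h \<theta> \<eta> x y \<nu> lam"
begin

abbreviation "residual k n \<equiv> lam k *\<^sub>R (F (y n) + \<nu> n) + y n - x (k - 1)"

lemma alg2_start: "x 0 \<in> C" "y 0 = x 0" "\<nu> 0 = 0" "lam 1 > 0" "(lam 1)\<^sup>2 * norm (F (y 0)) \<le> 2 * \<theta> / L"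
  using alg by (auto simp: alg2_def)

lemma alg2_skip:
  "k \<ge> 1 \<Longrightarrow> lam k * L / 2 * norm (residual k (k - 1)) \<le> \<theta>h \<Longrightarrow> y k = y (k - 1) \<and> \<nu> k = \<nu> (k - 1)"
  using alg unfolding alg2_def by metis

lemma alg2_newton:
  "k \<ge> 1 \<Longrightarrow> \<not> lam k * L / 2 * norm (residual k (k - 1)) \<le> \<theta>h \<Longrightarrow>
    \<nu> k \<in> normal_cone C (y k) \<and>
    norm (lam k *\<^sub>R (linearization F F' (y (k - 1)) (y k) + \<nu> k) + y k - x (k - 1))
      \<le> \<sigma>h * norm (y k - y (k - 1))"
  using alg unfolding alg2_def by metis

lemma alg2_extragradient:
  "k \<ge> 1 \<Longrightarrow> lam k * norm (y k - x (k - 1)) \<ge> \<eta> \<Longrightarrow>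
    x k = x (k - 1) - (\<tau> * lam k) *\<^sub>R (F (y k) + \<nu> k) \<and> lam (k + 1) = (1 - \<tau>) * lam k"
  using alg unfolding alg2_def by metis

lemma alg2_null:
  "k \<ge> 1 \<Longrightarrow> \<not> lam k * norm (y k - x (k - 1)) \<ge> \<eta> \<Longrightarrow>
    x k = x (k - 1) \<and> lam (k + 1) = lam k / (1 - \<tau>)"
  using alg unfolding alg2_def by metis

lemma inner_step_residual:
  assumes k: "k \<ge> 1" and lam: "lam k > 0" and \<nu>: "\<nu> (k - 1) \<in> normal_cone C (y (k - 1))"
    and res: "lam k * L / 2 * norm (residual k (k - 1)) \<le> \<theta>"
  shows "\<nu> k \<in> normal_cone C (y k) \<and> lam k * L / 2 * norm (residual k k) \<le> \<theta>h"
proof (cases "lam k * L / 2 * norm (residual k (k - 1)) \<le> \<theta>h")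
  case True
  thus ?thesis using alg2_skip[OF k] \<nu> by simp
next
  case False
  with alg2_newton[OF k] have "\<nu> k \<in> normal_cone C (y k)"
    and err: "norm (lam k *\<^sub>R (linearization F F' (y (k - 1)) (y k) + \<nu> k) + y k - x (k - 1))
      \<le> \<sigma>h * norm (y k - y (k - 1))"
    by auto
  moreover have "lam k * L / 2 * norm (residual k k) \<le> \<theta>h"
    using newton_step_residual[OF C_convex F_mono F_deriv F'_lip L_pos _ _ \<nu> _ lam err] res \<sigma>h
      \<open>\<nu> k \<in> normal_cone C (y k)\<close> by (simp add: add_diff_eq)
  ultimately show ?thesis by simp
qed

lemma outer_step_residual:
  assumes k: "k \<ge> 1" and lam: "lam k > 0" and res: "lam k * L / 2 * norm (residual k k) \<le> \<theta>h"
  shows "lam (k + 1) > 0 \<and> lam (k + 1) * L / 2 * norm (residual (k + 1) k) \<le> \<theta>"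
proof (cases "lam k * norm (y k - x (k - 1)) \<ge> \<eta>")
  case True
  with alg2_extragradient[OF k] have x': "x k = x (k - 1) - (\<tau> * lam k) *\<^sub>R (F (y k) + \<nu> k)"
    and lam': "lam (k + 1) = (1 - \<tau>) * lam k"
    by auto
  have "residual (k + 1) k = lam (k + 1) *\<^sub>R (F (y k) + \<nu> k) + y k - x k" by simp
  also have "\<dots> = ((1 - \<tau>) * lam k + \<tau> * lam k) *\<^sub>R (F (y k) + \<nu> k) + y k - x (k - 1)"
    unfolding x' lam' scaleR_add_left by (simp add: algebra_simps)
  finally have same: "residual (k + 1) k = residual k k" by (simp add: algebra_simps)
  have "lam (k + 1) * L / 2 * norm (residual (k + 1) k) = (1 - \<tau>) * (lam k * L / 2 * norm (residual k k))"
    unfolding same using lam' by simp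
  also have "\<dots> \<le> (1 - \<tau>) * \<theta>h" using res tau_less_one by (intro mult_left_mono) auto
  also have "\<dots> \<le> \<theta>"
    using tau_pos tau_less_one thetahat_nonneg thetahat_less by (smt (verit) mult_left_le_one_le)
  finally show ?thesis using lam lam' tau_less_one by simp
next
  case False
  with alg2_null[OF k] have x': "x k = x (k - 1)" and lam': "lam (k + 1) = lam k / (1 - \<tau>)" by auto
  have "lam k * L / 2 * norm (lam k *\<^sub>R (F (y k) + \<nu> k) + (y k - x (k - 1))) \<le> \<theta>h"
    using res by (simp add: add_diff_eq)
  from null_step_residual[OF lam this] False
  have "lam k / (1 - \<tau>) * L / 2 * norm ((lam k / (1 - \<tau>)) *\<^sub>R (F (y k) + \<nu> k) + (y k - x (k - 1))) \<le> \<theta>"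
    by simp
  thus ?thesis using x' lam' lam tau_less_one by (simp add: add_diff_eq)
qed

lemma residual_invariant:
  "k \<ge> 1 \<Longrightarrow> lam k > 0 \<and> \<nu> (k - 1) \<in> normal_cone C (y (k - 1)) \<and>
     lam k * L / 2 * norm (residual k (k - 1)) \<le> \<theta>"
proof (induction k rule: nat_induct_at_least)
  case base
  have "lam 1 * L / 2 * norm (residual 1 0) = L / 2 * ((lam 1)\<^sup>2 * norm (F (y 0)))"
    using alg2_start by (simp add: power2_eq_square)
  also have "\<dots> \<le> \<theta>" using alg2_start L_pos mult_left_mono[of _ "2 * \<theta> / L" "L / 2"] by simp
  finally show ?case using alg2_start zero_in_normal_cone by simp
next
  case (Suc k)
  thus ?case using inner_step_residual outer_step_residual by simp
qed

lemma lam_pos: "k \<ge> 1 \<Longrightarrow> lam k > 0"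
  using residual_invariant by blast

lemma newton_residual:
  "k \<ge> 1 \<Longrightarrow> \<nu> k \<in> normal_cone C (y k) \<and> lam k * L / 2 * norm (residual k k) \<le> \<theta>h"
  using inner_step_residual residual_invariant by blast

lemma large_step_relative_error:
  assumes k: "k \<ge> 1" and large: "lam k * norm (y k - x (k - 1)) \<ge> \<eta>"
  shows "norm (residual k k) \<le> \<sigma> * norm (y k - x (k - 1))"
proof -
  have "\<eta> * (L / 2 * norm (residual k k)) \<le> lam k * norm (y k - x (k - 1)) * (L / 2 * norm (residual k k))"
    using large L_pos by (intro mult_right_mono) auto
  also have "\<dots> = norm (y k - x (k - 1)) * (lam k * L / 2 * norm (residual k k))"
    by (simp add: algebra_simps)
  also have "\<dots> \<le> norm (y k - x (k - 1)) * \<theta>h"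
    using newton_residual[OF k] by (intro mult_left_mono) auto
  finally show ?thesis using eta_pos L_pos by (simp add: field_simps)
qed

abbreviation "ix \<equiv> idx_i (idxA x y lam \<eta>)"

lemma x_constant_between_large_steps:
  assumes "p \<le> q" and off: "\<And>m. p < m \<Longrightarrow> m \<le> q \<Longrightarrow> m \<notin> idxA x y lam \<eta>"
  shows "x q = x p"
  using assms(1)
proof (induction q rule: dec_induct)
  case (step n)
  hence "Suc n \<notin> idxA x y lam \<eta>" using off by simp
  hence "x (Suc n) = x n" using alg2_null[of "Suc n"] by (simp add: mem_idxA)
  with step show ?case by simp
qed simp

lemma large_step_subsequence:
  assumes k: "k \<in> idxK (idxA x y lam \<eta>)" and l: "l \<in> {1..k}"
  shows "ix l \<ge> 1" and "x (ix l - 1) = x (ix (l - 1))"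
    and "lam (ix l) * norm (y (ix l) - x (ix (l - 1))) \<ge> \<eta>"
proof -
  have A0: "0 \<notin> idxA x y lam \<eta>" by (simp add: mem_idxA)
  note in_A = idx_i_in[OF k A0 l]
  show "ix l \<ge> 1" using in_A by (simp add: mem_idxA)
  show x: "x (ix l - 1) = x (ix (l - 1))"
    using idx_i_pred_less[OF k A0 l] idx_i_gap[OF k A0 l]
    by (intro x_constant_between_large_steps) auto
  show "lam (ix l) * norm (y (ix l) - x (ix (l - 1))) \<ge> \<eta>" using in_A x by (simp add: mem_idxA)
qed

abbreviation "hpe_subsequence k z \<equiv> large_step_hpe_solution (\<lambda>l. x (ix l)) (\<lambda>l. y (ix l))
  (\<lambda>l. F (y (ix l)) + \<nu> (ix l)) (\<lambda>l. lam (ix l)) k \<tau> \<sigma> \<eta> z"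

lemma large_step_hpe_subsequence:
  assumes k: "k \<in> idxK (idxA x y lam \<eta>)" and z: "z \<in> solution_set F C"
  shows "hpe_subsequence k z"
proof (unfold_locales)
  fix l assume l: "l \<in> {1..k}"
  note sub = large_step_subsequence[OF k l]
  show "x (ix l) = x (ix (l - 1)) - (\<tau> * lam (ix l)) *\<^sub>R (F (y (ix l)) + \<nu> (ix l))"
    using alg2_extragradient[OF sub(1)] sub by simp
  show "norm (lam (ix l) *\<^sub>R (F (y (ix l)) + \<nu> (ix l)) + y (ix l) - x (ix (l - 1)))
      \<le> \<sigma> * norm (y (ix l) - x (ix (l - 1)))"
    using large_step_relative_error[OF sub(1)] sub by simp
  show "lam (ix l) > 0" using lam_pos[OF sub(1)] .
  show "lam (ix l) * norm (y (ix l) - x (ix (l - 1))) \<ge> \<eta>" using sub(3) .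
  have "F (y (ix l)) + \<nu> (ix l) \<in> FN F C (y (ix l))"
    using newton_residual[OF sub(1)] by (auto simp: FN_def)
  moreover have "0 \<in> FN F C z" using z by (simp add: solution_set_def)
  ultimately show "inner (F (y (ix l)) + \<nu> (ix l)) (y (ix l) - z) \<ge> 0"
    using FN_monotone[OF F_mono] by fastforce
qed (use k tau_pos tau_less_one sigma_nonneg sigma_less_one eta_pos in \<open>auto simp: idxK_def\<close>)

lemma le_at_infdist_solution_set:
  fixes f :: "real \<Rightarrow> real"
  assumes k: "k \<in> idxK (idxA x y lam \<eta>)" and sol: "solution_set F C \<noteq> {}"
    and f: "continuous_on UNIV f" and Q: "\<And>z. hpe_subsequence k z \<Longrightarrow> Q \<le> f (norm (x 0 - z))"
  shows "Q \<le> f (infdist (x 0) (solution_set F C))"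
  using le_at_infdist[OF sol f] Q large_step_hpe_subsequence[OF k] by (simp add: dist_norm)

lemma best_residual_bound:
  assumes k: "k \<in> idxK (idxA x y lam \<eta>)" and sol: "solution_set F C \<noteq> {}"
  shows "\<exists>j\<in>{1..k}. \<nu> (ix j) \<in> normal_cone C (y (ix j)) \<and>
    norm (F (y (ix j)) + \<nu> (ix j)) \<le> (infdist (x 0) (solution_set F C))\<^sup>2 / (\<tau> * \<eta> * (1 - \<sigma>) * real k)"
proof -
  have k1: "k \<ge> 1" using k by (simp add: idxK_def)
  define c where "c = \<tau> * \<eta> * (1 - \<sigma>) * real k"
  have c: "c > 0" unfolding c_def using tau_pos eta_pos sigma_less_one k1 by simp
  define m where "m = Min ((\<lambda>l. norm (F (y (ix l)) + \<nu> (ix l))) ` {1..k})"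
  have "m \<in> (\<lambda>l. norm (F (y (ix l)) + \<nu> (ix l))) ` {1..k}" unfolding m_def using k1 by (intro Min_in) auto
  then obtain j where j: "j \<in> {1..k}" "norm (F (y (ix j)) + \<nu> (ix j)) = m" by auto
  have "m \<le> (infdist (x 0) (solution_set F C))\<^sup>2 / c"
  proof (rule le_at_infdist_solution_set[OF k sol])
    show "continuous_on UNIV (\<lambda>t. t\<^sup>2 / c)" using c by (intro continuous_intros) auto
    show "m \<le> (norm (x 0 - z))\<^sup>2 / c" if "hpe_subsequence k z" for z
      using large_step_hpe_solution.min_norm_V_le[OF that] by (simp add: m_def c_def)
  qed
  moreover have "\<nu> (ix j) \<in> normal_cone C (y (ix j))"
    using newton_residual large_step_subsequence(1)[OF k j(1)] by blast
  ultimately show ?thesis using j by (auto simp: c_def)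
qed

lemma erg_in_enlargement:
  assumes k: "k \<in> idxK (idxA x y lam \<eta>)"
  shows "erg_avg lam ix (\<lambda>n. F (y n) + \<nu> n) k
    \<in> enlargement (FN F C) (erg_eps lam ix y (\<lambda>n. F (y n) + \<nu> n) k) (erg_avg lam ix y k)"
proof (rule erg_avg_in_enlargement)
  have ix: "\<And>l. l \<in> {1..k} \<Longrightarrow> ix l \<ge> 1" using large_step_subsequence(1)[OF k] .
  show "erg_Lambda lam ix k > 0"
    unfolding erg_Lambda_def using k ix lam_pos by (intro sum_pos) (auto simp: idxK_def)
  show "lam (ix l) \<ge> 0" if "l \<in> {1..k}" for l using lam_pos[OF ix[OF that]] by simp
  show "F (y (ix l)) + \<nu> (ix l) \<in> FN F C (y (ix l))" if "l \<in> {1..k}" for l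
    using newton_residual[OF ix[OF that]] by (auto simp: FN_def)
qed (rule FN_monotone[OF F_mono])

lemma ergodic_denominator_pos:
  "k \<in> idxK (idxA x y lam \<eta>) \<Longrightarrow> \<tau> powr (3/2) * \<eta> * (1 - \<sigma>\<^sup>2) * real k powr (3/2) > 0"
  using tau_pos eta_pos sigma_nonneg sigma_less_one by (simp add: idxK_def abs_square_less_1)

lemma erg_residual_bound:
  assumes k: "k \<in> idxK (idxA x y lam \<eta>)" and sol: "solution_set F C \<noteq> {}"
  shows "norm (erg_avg lam ix (\<lambda>n. F (y n) + \<nu> n) k) \<le> 2 * (infdist (x 0) (solution_set F C))\<^sup>2
    / (\<tau> powr (3/2) * \<eta> * sqrt (1 - \<sigma>\<^sup>2) * real k powr (3/2))"
proof -
  define c where "c = \<tau> powr (3/2) * \<eta> * sqrt (1 - \<sigma>\<^sup>2) * real k powr (3/2)"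
  have c: "c > 0" using ergodic_denominator_pos[OF k] by (simp add: c_def zero_less_mult_iff)
  have "norm (erg_avg lam ix (\<lambda>n. F (y n) + \<nu> n) k) \<le> 2 * (infdist (x 0) (solution_set F C))\<^sup>2 / c"
  proof (rule le_at_infdist_solution_set[OF k sol])
    show "continuous_on UNIV (\<lambda>t. 2 * t\<^sup>2 / c)" using c by (intro continuous_intros) auto
    show "norm (erg_avg lam ix (\<lambda>n. F (y n) + \<nu> n) k) \<le> 2 * (norm (x 0 - z))\<^sup>2 / c"
      if "hpe_subsequence k z" for z
      using large_step_hpe_solution.norm_erg_avg_V_le[OF that]
        erg_avg_reindex[of lam ix "\<lambda>n. F (y n) + \<nu> n" k]
      by (simp add: c_def)
  qed
  thus ?thesis by (simp add: c_def)
qed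

lemma erg_eps_bound:
  assumes k: "k \<in> idxK (idxA x y lam \<eta>)" and sol: "solution_set F C \<noteq> {}"
  shows "erg_eps lam ix y (\<lambda>n. F (y n) + \<nu> n) k \<le> 2 * infdist (x 0) (solution_set F C) ^ 3
    / (\<tau> powr (3/2) * \<eta> * (1 - \<sigma>\<^sup>2) * real k powr (3/2))"
proof -
  define c where "c = \<tau> powr (3/2) * \<eta> * (1 - \<sigma>\<^sup>2) * real k powr (3/2)"
  have c: "c > 0" using ergodic_denominator_pos[OF k] by (simp add: c_def)
  have "erg_eps lam ix y (\<lambda>n. F (y n) + \<nu> n) k \<le> 2 * infdist (x 0) (solution_set F C) ^ 3 / c"
  proof (rule le_at_infdist_solution_set[OF k sol])
    show "continuous_on UNIV (\<lambda>t. 2 * t ^ 3 / c)" using c by (intro continuous_intros) auto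
    show "erg_eps lam ix y (\<lambda>n. F (y n) + \<nu> n) k \<le> 2 * norm (x 0 - z) ^ 3 / c"
      if "hpe_subsequence k z" for z
      using large_step_hpe_solution.erg_eps_le[OF that]
        erg_eps_reindex[of lam ix y "\<lambda>n. F (y n) + \<nu> n" k]
      by (simp add: c_def)
  qed
  thus ?thesis by (simp add: c_def)
qed

end

theorem corollary4p6:
  fixes F :: "'a::{real_inner, complete_space} \<Rightarrow> 'a"
    and F' :: "'a \<Rightarrow> 'a \<Rightarrow>\<^sub>L 'a"
    and C :: "'a set"
    and L \<sigma>h \<theta> \<eta> :: real
    and x y \<nu> :: "nat \<Rightarrow> 'a"
    and lam :: "nat \<Rightarrow> real"
  assumes C_ne: "C \<noteq> {}" and C_closed: "closed C" and C_convex: "convex C"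
    and F_mono: "\<forall>u\<in>C. \<forall>w\<in>C. inner (F u - F w) (u - w) \<ge> 0"
    and F_deriv: "\<forall>u\<in>C. (F has_derivative blinfun_apply (F' u)) (at u within C)"
    and F'_cont: "continuous_on C F'"
    and F'_lip: "\<forall>u\<in>C. \<forall>w\<in>C. norm (F' u - F' w) \<le> L * norm (u - w)"
    and L_pos: "L > 0"
    and sol_ne: "solution_set F C \<noteq> {}"
    and sh: "0 \<le> \<sigma>h" "\<sigma>h < 1/2"
    and th: "0 < \<theta>" "\<theta> < (1 - \<sigma>h) * (1 - 2 * \<sigma>h)"
    and eta: "\<eta> > 2 * thetahat \<theta> \<sigma>h / L"
    and alg: "alg2 F F' C L \<sigma>h \<theta> \<eta> x y \<nu> lam"
  shows "let A = idxA x y lam \<eta>; i = idx_i A; \<tau> = tau \<theta> \<sigma>h \<eta> L;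
           \<sigma> = 2 * thetahat \<theta> \<sigma>h / (\<eta> * L);
           d0 = infdist (x 0) (solution_set F C);
           g = (\<lambda>n. F (y n) + \<nu> n);
           ya = erg_avg lam i y; va = erg_avg lam i g; \<epsilon>a = erg_eps lam i y g
         in \<forall>k\<in>idxK A.
           (\<exists>j\<in>{1..k}. \<nu> (i j) \<in> normal_cone C (y (i j)) \<and>
              norm (F (y (i j)) + \<nu> (i j)) \<le> d0\<^sup>2 / (\<tau> * \<eta> * (1 - \<sigma>) * real k))
         \<and> va k \<in> enlargement (FN F C) (\<epsilon>a k) (ya k)
         \<and> norm (va k) \<le> 2 * d0\<^sup>2 / (\<tau> powr (3/2) * \<eta> * sqrt (1 - \<sigma>\<^sup>2) * real k powr (3/2))
         \<and> \<epsilon>a k \<le> 2 * d0 ^ 3 / (\<tau> powr (3/2) * \<eta> * (1 - \<sigma>\<^sup>2) * real k powr (3/2))"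
proof -
  interpret alg2_run L \<sigma>h \<theta> \<eta> F F' C x y \<nu> lam
    using C_convex F_mono F_deriv F'_lip L_pos sh th eta alg by unfold_locales
  show ?thesis
    unfolding Let_def
    using best_residual_bound erg_in_enlargement erg_residual_bound erg_eps_bound sol_ne by blast
qed

end
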